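(* Let $p>1$, $\psi(w)=\frac1p\|w\|_p^p$ on $\mathbb{R}^d$, and let $L:\mathbb{R}^d\to\mathbb{R}$ be differentiable and convex. Let $w_{t+1}$ be obtained from $w_t$ by the mirror descent update $\nabla\psi(w_{t+1})=\nabla\psi(w_t)-\eta\nabla L(w_t)$, where $\eta>0$ is such that $\psi-\eta L$ is convex. Then $$\frac{p-1}{p}\|w_{t+1}\|_p^p-\frac{p-1}{p}\|w_t\|_p^p+\eta L(w_{t+1})-\eta L(w_t)\le\langle-\eta\nabla L(w_t),w_t\rangle.$$
   Context: In the paper $L(w)=\frac1n\sum_i\ell(y_i\langle w,x_i\rangle)$ with $\ell$ differentiable, decreasing and convex. *)

theory Defs
  imports "HOL-Analysis.Analysis"
begin

definition pnorm_pow :: "real \<Rightarrow> real^'n \<Rightarrow> real" where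
  "pnorm_pow p w = (\<Sum>i\<in>UNIV. \<bar>w $ i\<bar> powr p)"

definition psi :: "real \<Rightarrow> real^'n \<Rightarrow> real" where
  "psi p w = pnorm_pow p w / p"

end

theory Submission
  imports Defs
begin

text \<open>The update makes \<open>\<nabla>\<psi>(w')\<close> the gradient of the convex function \<open>\<psi> - \<eta>L\<close> at \<open>w\<close>,
  so the tangent inequality of \<open>\<psi> - \<eta>L\<close> at \<open>w\<close>, evaluated at \<open>w'\<close>, bounds its increment
  from below by \<open>\<langle>\<nabla>\<psi>(w'), w' - w\<rangle>\<close>. Since \<open>\<psi>\<close> is positively homogeneous of degree
  \<open>p\<close>, Euler's identity gives \<open>\<langle>\<nabla>\<psi>(v), v\<rangle> = \<parallel>v\<parallel>\<^sub>p\<^sup>p\<close>, and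
  \<open>\<parallel>v\<parallel>\<^sub>p\<^sup>p - \<psi>(v) = (p-1)/p \<parallel>v\<parallel>\<^sub>p\<^sup>p\<close>.\<close>

lemma convex_on_line:
  fixes F :: "'a::real_vector \<Rightarrow> real"
  assumes "convex_on UNIV F"
  shows "convex_on UNIV (\<lambda>t::real. F (a + t *\<^sub>R b))"
proof (rule convex_onI)
  fix t x y :: real
  assume t: "0 < t" "t < 1"
  have "a + ((1 - t) *\<^sub>R x + t *\<^sub>R y) *\<^sub>R b = (1 - t) *\<^sub>R (a + x *\<^sub>R b) + t *\<^sub>R (a + y *\<^sub>R b)"
    by (simp add: algebra_simps)
  then show "F (a + ((1 - t) *\<^sub>R x + t *\<^sub>R y) *\<^sub>R b) \<le> (1 - t) * F (a + x *\<^sub>R b) + t * F (a + y *\<^sub>R b)"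
    using assms t by (simp add: convex_on_def)
qed simp

lemma convex_on_imp_above_tangent_derivative:
  fixes F :: "'a::real_normed_vector \<Rightarrow> real"
  assumes convex: "convex_on UNIV F" and deriv: "(F has_derivative D) (at x)"
  shows "F y - F x \<ge> D (y - x)"
proof -
  let ?g = "\<lambda>t::real. F (x + t *\<^sub>R (y - x))"
  have "((\<lambda>t::real. x + t *\<^sub>R (y - x)) has_derivative (\<lambda>t. t *\<^sub>R (y - x))) (at 0)"
    by (auto intro!: derivative_eq_intros)
  from diff_chain_at[OF this, of F D] deriv
  have "(?g has_derivative (\<lambda>t. D (t *\<^sub>R (y - x)))) (at 0)"
    by (simp add: o_def)
  moreover have "D (t *\<^sub>R (y - x)) = D (y - x) * t" for t
    using linear_cmul[OF has_derivative_linear[OF deriv]] by simp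
  ultimately have "(?g has_field_derivative D (y - x)) (at 0)"
    by (simp add: has_field_derivative_def)
  moreover have "convex_on UNIV ?g"
    by (rule convex_on_line[OF convex])
  ultimately show ?thesis
    using convex_on_imp_above_tangent[of UNIV ?g 0 1 "D (y - x)"] by simp
qed

lemma homogeneous_has_derivative_Euler:
  fixes f :: "'a::real_normed_vector \<Rightarrow> real"
  assumes homogeneous: "\<And>t. t > 0 \<Longrightarrow> f (t *\<^sub>R x) = t powr p * f x"
    and deriv: "(f has_derivative D) (at x)"
  shows "D x = p * f x"
proof -
  have "((\<lambda>t::real. t *\<^sub>R x) has_derivative (\<lambda>t. t *\<^sub>R x)) (at 1)"
    by (auto intro!: derivative_eq_intros)
  from diff_chain_at[OF this, of f D] deriv
  have "((\<lambda>t. f (t *\<^sub>R x)) has_derivative (\<lambda>t. D (t *\<^sub>R x))) (at 1)"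
    by (simp add: o_def)
  moreover have "D (t *\<^sub>R x) = D x * t" for t
    using linear_cmul[OF has_derivative_linear[OF deriv]] by simp
  ultimately have chain: "((\<lambda>t. f (t *\<^sub>R x)) has_field_derivative D x) (at 1)"
    by (simp add: has_field_derivative_def)
  have "((\<lambda>t. t powr p * f x) has_field_derivative p * f x) (at 1)"
    by (auto intro!: derivative_eq_intros)
  then have "((\<lambda>t. f (t *\<^sub>R x)) has_field_derivative p * f x) (at 1)"
    by (rule has_field_derivative_transform_within_open[of _ _ _ "{0<..}"])
      (auto simp: homogeneous)
  with chain show ?thesis
    by (rule DERIV_unique)
qed

lemma pnorm_pow_scaleR:
  assumes "t > 0"
  shows "pnorm_pow p (t *\<^sub>R x) = t powr p * pnorm_pow p x"
  using assms by (simp add: pnorm_pow_def sum_distrib_left abs_mult powr_mult)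

lemma psi_gradient_inner_self:
  assumes "p \<noteq> 0" and "(psi p has_derivative (\<lambda>h. G \<bullet> h)) (at x)"
  shows "G \<bullet> x = pnorm_pow p x"
proof -
  have "psi p (t *\<^sub>R x) = t powr p * psi p x" if "t > 0" for t
    using that by (simp add: psi_def pnorm_pow_scaleR)
  from homogeneous_has_derivative_Euler[OF this assms(2)] assms(1)
  show ?thesis by (simp add: psi_def)
qed

theorem lemma6:
  fixes p \<eta> :: real
    and L :: "real^'n \<Rightarrow> real"
    and gradL gradpsi :: "real^'n \<Rightarrow> real^'n"
    and w w' :: "real^'n"
  assumes p_gt: "p > 1"
    and gradL: "\<And>x. (L has_derivative (\<lambda>h. gradL x \<bullet> h)) (at x)"
    and L_convex: "convex_on UNIV L"
    and gradpsi: "\<And>x. (psi p has_derivative (\<lambda>h. gradpsi x \<bullet> h)) (at x)"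
    and eta_pos: "\<eta> > 0"
    and psi_minus_convex: "convex_on UNIV (\<lambda>x. psi p x - \<eta> * L x)"
    and update: "gradpsi w' = gradpsi w - \<eta> *\<^sub>R gradL w"
  shows "(p - 1) / p * pnorm_pow p w' - (p - 1) / p * pnorm_pow p w
           + \<eta> * L w' - \<eta> * L w \<le> (- \<eta> *\<^sub>R gradL w) \<bullet> w"
proof -
  have "((\<lambda>x. psi p x - \<eta> * L x) has_derivative (\<lambda>h. gradpsi w' \<bullet> h)) (at w)"
    unfolding update inner_diff_left
    by (auto intro!: derivative_eq_intros gradpsi gradL)
  from convex_on_imp_above_tangent_derivative[OF psi_minus_convex this]
  have tangent: "gradpsi w' \<bullet> (w' - w) \<le> (psi p w' - \<eta> * L w') - (psi p w - \<eta> * L w)" .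
  have Euler: "gradpsi x \<bullet> x = pnorm_pow p x" for x
    using p_gt by (auto intro: psi_gradient_inner_self gradpsi)
  have coefficient: "(p - 1) / p * pnorm_pow p x = pnorm_pow p x - psi p x" for x :: "real^'n"
    using p_gt by (simp add: psi_def field_simps)
  show ?thesis
    unfolding coefficient
    using tangent Euler[of w] Euler[of w'] update
    by (simp add: inner_diff_left inner_diff_right algebra_simps)
qed

end
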